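(* Let $\Phi \in \mathbb{R}^{M \times N}$, let $\Lambda \subset \{1, 2, \dots, N\}$, and let $\widetilde{x} \in \mathbb{R}^N$ with $\mathrm{supp}(\widetilde{x}) \cap \Lambda = \emptyset$. Suppose $\Phi$ satisfies the restricted isometry property of order $\|\widetilde{x}\|_0 + |\Lambda| + 1$ with isometry constant $\delta$, and define $h = A_\Lambda^T A_\Lambda \widetilde{x}$. If $$\|\widetilde{x}\|_\infty > \frac{2\delta}{1-\delta}\|\widetilde{x}\|_2,$$ then $\arg\max_j |h(j)| \in \mathrm{supp}(\widetilde{x})$, i.e. every index $j$ maximizing $|h(j)|$ belongs to $\mathrm{supp}(\widetilde{x})$.
   Context: For $x \in \mathbb{R}^N$, $\|x\|_0 := |\mathrm{supp}(x)|$. A matrix $\Phi \in \mathbb{R}^{M\times N}$ satisfies the restricted isometry property (RIP) of order $K$ with isometry constant $\delta \in (0,1)$ if $(1-\delta)\|x\|_2^2 \le \|\Phi x\|_2^2 \le (1+\delta)\|x\|_2^2$ for all $x \in \mathbb{R}^N$ with $\|x\|_0 \le K$. For $\Lambda \subset \{1,\dots,N\}$, $\Phi_\Lambda$ is the submatrix of $\Phi$ consisting of the columns indexed by $\Lambda$, $P_\Lambda$ is the orthogonal projection onto the column space of $\Phi_\Lambda$, $P_\Lambda^\perp = I - P_\Lambda$, and $A_\Lambda := P_\Lambda^\perp \Phi$. *)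

theory Defs
  imports "HOL-Analysis.Analysis"
begin

definition supp :: "real^'n \<Rightarrow> 'n set" where
  "supp x = {i. x $ i \<noteq> 0}"

definition l0 :: "real^'n \<Rightarrow> nat" where
  "l0 x = card (supp x)"

definition RIP :: "real^'n^'m \<Rightarrow> nat \<Rightarrow> real \<Rightarrow> bool" where
  "RIP Phi K \<delta> \<longleftrightarrow> 0 < \<delta> \<and> \<delta> < 1 \<and>
     (\<forall>x::real^'n. l0 x \<le> K \<longrightarrow>
        (1 - \<delta>) * (norm x)\<^sup>2 \<le> (norm (Phi *v x))\<^sup>2 \<and>
        (norm (Phi *v x))\<^sup>2 \<le> (1 + \<delta>) * (norm x)\<^sup>2)"

definition colspace :: "real^'n^'m \<Rightarrow> 'n set \<Rightarrow> (real^'m) set" where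
  "colspace Phi \<Lambda> = span ((\<lambda>j. column j Phi) ` \<Lambda>)"

definition projP :: "real^'n^'m \<Rightarrow> 'n set \<Rightarrow> real^'m \<Rightarrow> real^'m" where
  "projP Phi \<Lambda> v = (THE p. p \<in> colspace Phi \<Lambda> \<and>
       (\<forall>w \<in> colspace Phi \<Lambda>. (v - p) \<bullet> w = 0))"

definition projPperp :: "real^'n^'m \<Rightarrow> 'n set \<Rightarrow> real^'m \<Rightarrow> real^'m" where
  "projPperp Phi \<Lambda> v = v - projP Phi \<Lambda> v"

text \<open>A_Lambda = P_Lambda^perp Phi, as a matrix (column j is P^perp applied to column j).\<close>
definition A_mat :: "real^'n^'m \<Rightarrow> 'n set \<Rightarrow> real^'n^'m" where
  "A_mat Phi \<Lambda> = (\<chi> i j. projPperp Phi \<Lambda> (column j Phi) $ i)"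

end

theory Submission
  imports Defs
begin

text \<open>Since \<open>P\<^sup>\<bottom>\<close> annihilates the columns indexed by \<open>\<Lambda>\<close>, every
  \<open>A v\<close> equals \<open>\<Phi> (v - z)\<close> for some \<open>z\<close> supported in \<open>\<Lambda>\<close>, and Pythagoras turns the RIP of
  \<open>\<Phi>\<close> into a RIP of \<open>A\<close> on vectors with support disjoint from \<open>\<Lambda>\<close>. Polarization then gives
  \<open>|h(j) - x(j)| = |\<langle>A e\<^sub>j, A x\<rangle> - \<langle>e\<^sub>j, x\<rangle>| \<le> \<delta> \<parallel>x\<parallel>\<^sub>2\<close> for \<open>j \<notin> \<Lambda>\<close>, while \<open>h(j) = 0\<close> for
  \<open>j \<in> \<Lambda>\<close>. Hence \<open>|h|\<close> is at most \<open>\<delta> \<parallel>x\<parallel>\<^sub>2\<close> off the support of \<open>x\<close>, but exceeds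
  \<open>\<parallel>x\<parallel>\<^sub>\<infinity> - \<delta> \<parallel>x\<parallel>\<^sub>2 > \<delta> \<parallel>x\<parallel>\<^sub>2\<close> at an index where \<open>|x|\<close> is maximal.\<close>

lemma projP_eqI:
  fixes Phi :: "real^'n^'m"
  assumes p: "p \<in> colspace Phi L" and orth: "\<And>w. w \<in> colspace Phi L \<Longrightarrow> (v - p) \<bullet> w = 0"
  shows "projP Phi L v = p"
  unfolding projP_def
proof (rule the_equality)
  show "p \<in> colspace Phi L \<and> (\<forall>w \<in> colspace Phi L. (v - p) \<bullet> w = 0)"
    using p orth by blast
next
  fix p' assume p': "p' \<in> colspace Phi L \<and> (\<forall>w \<in> colspace Phi L. (v - p') \<bullet> w = 0)"
  have "p' - p \<in> colspace Phi L"
    using p p' unfolding colspace_def by (metis span_diff)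
  then have "(v - p) \<bullet> (p' - p) = 0" "(v - p') \<bullet> (p' - p) = 0"
    using orth p' by blast+
  then have "(p' - p) \<bullet> (p' - p) = 0"
    by (simp add: inner_diff_left)
  then show "p' = p" by simp
qed

lemma projP_in_colspace_orthogonal:
  fixes Phi :: "real^'n^'m"
  shows "projP Phi L v \<in> colspace Phi L"
    and "w \<in> colspace Phi L \<Longrightarrow> (v - projP Phi L v) \<bullet> w = 0"
proof -
  obtain y z where y: "y \<in> span ((\<lambda>j. column j Phi) ` L)"
    and z: "\<And>w. w \<in> span ((\<lambda>j. column j Phi) ` L) \<Longrightarrow> orthogonal z w" and v: "v = y + z"
    using orthogonal_subspace_decomp_exists[of "(\<lambda>j. column j Phi) ` L" v] by blast
  note y = y[folded colspace_def] and z = z[folded colspace_def]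
  have "projP Phi L v = y"
    using y z v by (intro projP_eqI) (simp_all add: orthogonal_def)
  moreover from this have "v - projP Phi L v = z"
    using v by simp
  ultimately show "projP Phi L v \<in> colspace Phi L" "w \<in> colspace Phi L \<Longrightarrow> (v - projP Phi L v) \<bullet> w = 0"
    using y z by (simp_all add: orthogonal_def)
qed

lemma projPperp_colspace:
  fixes Phi :: "real^'n^'m"
  assumes "v \<in> colspace Phi L"
  shows "projPperp Phi L v = 0"
proof -
  have "projP Phi L v = v"
    using assms by (intro projP_eqI) simp_all
  then show ?thesis by (simp add: projPperp_def)
qed

lemma norm_projPperp_le:
  fixes Phi :: "real^'n^'m"
  shows "norm (projPperp Phi L v) \<le> norm v"
proof -
  have "orthogonal (projPperp Phi L v) (projP Phi L v)"
    unfolding orthogonal_def projPperp_def by (intro projP_in_colspace_orthogonal)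
  then have "(norm (projPperp Phi L v + projP Phi L v))\<^sup>2
      = (norm (projPperp Phi L v))\<^sup>2 + (norm (projP Phi L v))\<^sup>2"
    by (rule norm_add_Pythagorean)
  then have "(norm (projPperp Phi L v))\<^sup>2 \<le> (norm v)\<^sup>2"
    by (simp add: projPperp_def)
  then show ?thesis by (rule power2_le_imp_le) simp
qed

lemma colspace_supported_preimage:
  fixes Phi :: "real^'n^'m"
  assumes "q \<in> colspace Phi L"
  obtains z where "supp z \<subseteq> L" and "q = Phi *v z"
proof -
  let ?Q = "(*v) Phi ` {z. supp z \<subseteq> L}"
  have "{z. supp z \<subseteq> L} = {z :: real^'n. \<forall>i. i \<notin> L \<longrightarrow> z$i = 0}"
    by (auto simp: supp_def)
  then have "subspace {z :: real^'n. supp z \<subseteq> L}"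
    by (simp add: subspace_def)
  then have "subspace ?Q"
    by (rule linear_subspace_image[OF matrix_vector_mul_linear])
  moreover have "(\<lambda>j. column j Phi) ` L \<subseteq> ?Q"
  proof
    fix v assume "v \<in> (\<lambda>j. column j Phi) ` L"
    then obtain j where "j \<in> L" "v = Phi *v axis j 1"
      by (auto simp: matrix_vector_mult_basis)
    moreover have "supp (axis j (1::real)) = {j}"
      by (auto simp: supp_def axis_def)
    ultimately show "v \<in> ?Q" by auto
  qed
  ultimately have "colspace Phi L \<subseteq> ?Q"
    unfolding colspace_def by (rule span_minimal[rotated])
  then show ?thesis using assms that by blast
qed

text \<open>The defining formula of \<open>A_mat\<close> applies \<open>P\<^sup>\<bottom>\<close> column by column; linearity of the
  projection identifies the resulting matrix with the operator \<open>P\<^sup>\<bottom> \<Phi>\<close>.\<close>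
lemma A_mat_mult_vec:
  fixes Phi :: "real^'n^'m"
  shows "A_mat Phi L *v u = projPperp Phi L (Phi *v u)"
proof -
  let ?p = "\<lambda>j. projP Phi L (column j Phi)"
  define q where "q = (\<Sum>j\<in>UNIV. u$j *\<^sub>R ?p j)"
  have "column j (A_mat Phi L) = column j Phi - ?p j" for j
    unfolding A_mat_def column_def projPperp_def by (simp add: vec_eq_iff)
  then have Au: "A_mat Phi L *v u = (\<Sum>j\<in>UNIV. u$j *\<^sub>R (column j Phi - ?p j))"
    by (simp add: matrix_mult_sum scalar_mult_eq_scaleR)
  also have "\<dots> = Phi *v u - q"
    by (simp add: q_def matrix_mult_sum scalar_mult_eq_scaleR scaleR_diff_right sum_subtractf)
  finally have Au_q: "A_mat Phi L *v u = Phi *v u - q" .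
  have "projP Phi L (Phi *v u) = q"
  proof (rule projP_eqI)
    show "q \<in> colspace Phi L"
      unfolding q_def colspace_def
      using projP_in_colspace_orthogonal(1)[of Phi L, unfolded colspace_def]
      by (intro subspace_sum subspace_scale) auto
  next
    fix w assume "w \<in> colspace Phi L"
    then have "(column j Phi - ?p j) \<bullet> w = 0" for j
      by (rule projP_in_colspace_orthogonal(2))
    then show "(Phi *v u - q) \<bullet> w = 0"
      unfolding Au_q[symmetric] Au inner_sum_left by simp
  qed
  then show ?thesis
    using Au_q by (simp add: projPperp_def)
qed

lemma A_mat_mult_supported_shift:
  fixes Phi :: "real^'n^'m"
  obtains z where "supp z \<subseteq> L" and "A_mat Phi L *v u = Phi *v (u - z)"
proof -
  obtain z where "supp z \<subseteq> L" "projP Phi L (Phi *v u) = Phi *v z"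
    using colspace_supported_preimage projP_in_colspace_orthogonal(1) by metis
  then show ?thesis
    using that by (simp add: A_mat_mult_vec projPperp_def matrix_vector_mult_diff_distrib)
qed

lemma A_mat_mult_axis_in:
  fixes Phi :: "real^'n^'m"
  assumes "j \<in> L"
  shows "A_mat Phi L *v axis j 1 = 0"
proof -
  have "Phi *v axis j 1 \<in> colspace Phi L"
    unfolding colspace_def matrix_vector_mult_basis using assms by (auto intro: span_base)
  then show ?thesis
    by (simp add: A_mat_mult_vec projPperp_colspace)
qed

lemma transpose_mult_self_component:
  fixes A :: "real^'n^'m"
  shows "(transpose A *v (A *v x)) $ k = (A *v axis k 1) \<bullet> (A *v x)"
  unfolding matrix_vector_mult_basis
  by (simp add: transpose_def matrix_vector_mult_def column_def inner_vec_def mult.commute)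

lemma l0_le_of_supp_subset_insert:
  assumes "supp s \<subseteq> insert j (supp x)"
  shows "l0 s \<le> l0 x + 1"
proof -
  have "l0 s \<le> card (insert j (supp x))"
    unfolding l0_def using assms by (intro card_mono) auto
  also have "\<dots> \<le> l0 x + 1"
    unfolding l0_def by (simp add: card_insert_le_m1 card_insert_if)
  finally show ?thesis .
qed

lemma A_mat_RIP:
  fixes Phi :: "real^'n^'m"
  assumes rip: "RIP Phi K d" and disj: "supp u \<inter> L = {}" and card: "l0 u + card L \<le> K"
  shows "(1 - d) * (norm u)\<^sup>2 \<le> (norm (A_mat Phi L *v u))\<^sup>2
       \<and> (norm (A_mat Phi L *v u))\<^sup>2 \<le> (1 + d) * (norm u)\<^sup>2"
proof
  have R: "\<And>x::real^'n. l0 x \<le> K \<Longrightarrow> (1 - d) * (norm x)\<^sup>2 \<le> (norm (Phi *v x))\<^sup>2 \<and>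
        (norm (Phi *v x))\<^sup>2 \<le> (1 + d) * (norm x)\<^sup>2" and d: "d < 1"
    using rip unfolding RIP_def by blast+
  obtain z where z: "supp z \<subseteq> L" and Au: "A_mat Phi L *v u = Phi *v (u - z)"
    by (rule A_mat_mult_supported_shift)
  have "supp (u - z) \<subseteq> supp u \<union> L"
    using z unfolding supp_def by auto
  then have "l0 (u - z) \<le> card (supp u \<union> L)"
    unfolding l0_def by (intro card_mono) auto
  also have "\<dots> \<le> l0 u + card L"
    unfolding l0_def by (rule card_Un_le)
  finally have "l0 (u - z) \<le> K" using card by simp
  \<comment> \<open>\<open>u\<close> and \<open>z\<close> have disjoint supports, so removing \<open>z\<close> can only increase the norm.\<close>
  have "u \<bullet> z = 0"
    using disj z unfolding inner_vec_def supp_def by (intro sum.neutral) auto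
  then have "(norm u)\<^sup>2 \<le> (norm (u - z))\<^sup>2"
    by (simp add: power2_norm_eq_inner inner_diff_left inner_diff_right inner_commute)
  then have "(1 - d) * (norm u)\<^sup>2 \<le> (1 - d) * (norm (u - z))\<^sup>2"
    using d by (intro mult_left_mono) auto
  also have "\<dots> \<le> (norm (A_mat Phi L *v u))\<^sup>2"
    using R[OF \<open>l0 (u - z) \<le> K\<close>] Au by simp
  finally show "(1 - d) * (norm u)\<^sup>2 \<le> (norm (A_mat Phi L *v u))\<^sup>2" .
  have "norm (A_mat Phi L *v u) \<le> norm (Phi *v u)"
    by (simp add: A_mat_mult_vec norm_projPperp_le)
  then have "(norm (A_mat Phi L *v u))\<^sup>2 \<le> (norm (Phi *v u))\<^sup>2"
    by (rule power_mono) simp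
  also have "\<dots> \<le> (1 + d) * (norm u)\<^sup>2"
    using R[of u] card by simp
  finally show "(norm (A_mat Phi L *v u))\<^sup>2 \<le> (1 + d) * (norm u)\<^sup>2" .
qed

lemma inner_image_deviation_le:
  fixes T :: "'a::real_inner \<Rightarrow> 'b::real_inner"
  assumes T: "linear T" and a: "norm a = 1" and b: "norm b = 1"
    and near: "\<And>v. v \<in> {a + b, a - b} \<Longrightarrow>
      (1 - d) * (norm v)\<^sup>2 \<le> (norm (T v))\<^sup>2 \<and> (norm (T v))\<^sup>2 \<le> (1 + d) * (norm v)\<^sup>2"
  shows "\<bar>T a \<bullet> T b - a \<bullet> b\<bar> \<le> d"
proof -
  have polar: "(norm (x + y))\<^sup>2 - (norm (x - y))\<^sup>2 = 4 * (x \<bullet> y)" for x y :: "'c::real_inner"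
    by (simp add: power2_norm_eq_inner inner_add_left inner_add_right inner_diff_left
        inner_diff_right inner_commute)
  have parallelogram: "(norm (a + b))\<^sup>2 + (norm (a - b))\<^sup>2 = 4"
    using a b by (simp add: power2_norm_eq_inner inner_add_left inner_add_right inner_diff_left
        inner_diff_right inner_commute norm_eq_1)
  define P Q where "P = (norm (a + b))\<^sup>2" and "Q = (norm (a - b))\<^sup>2"
  have "T (a + b) = T a + T b" "T (a - b) = T a - T b"
    using T by (simp_all add: linear_add linear_diff)
  then have "(1 - d) * P \<le> (norm (T a + T b))\<^sup>2" "(norm (T a + T b))\<^sup>2 \<le> (1 + d) * P"
    "(1 - d) * Q \<le> (norm (T a - T b))\<^sup>2" "(norm (T a - T b))\<^sup>2 \<le> (1 + d) * Q"
    using near[of "a + b"] near[of "a - b"] by (simp_all add: P_def Q_def)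
  moreover have "d * P + d * Q = 4 * d" "P - Q = 4 * (a \<bullet> b)"
    using parallelogram polar[of a b] by (simp_all add: P_def Q_def flip: distrib_left)
  ultimately show ?thesis
    using polar[of "T a" "T b"] by (simp add: algebra_simps abs_le_iff)
qed

lemma A_mat_inner_axis_deviation:
  fixes Phi :: "real^'n^'m"
  assumes rip: "RIP Phi (l0 x + card L + 1) d" and disj: "supp x \<inter> L = {}" and j: "j \<notin> L"
  shows "\<bar>(A_mat Phi L *v axis j 1) \<bullet> (A_mat Phi L *v x) - x$j\<bar> \<le> d * norm x"
proof (cases "x = 0")
  case True
  then show ?thesis by simp
next
  case False
  let ?A = "(*v) (A_mat Phi L)"
  define a :: "real^'n" where "a = axis j 1"
  define b where "b = x /\<^sub>R norm x"
  have nx: "norm x > 0" using False by simp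
  have supp_ab: "supp (a + b) \<subseteq> insert j (supp x)" "supp (a - b) \<subseteq> insert j (supp x)"
    unfolding a_def b_def supp_def by (auto simp: axis_def)
  have "\<bar>?A a \<bullet> ?A b - a \<bullet> b\<bar> \<le> d"
  proof (rule inner_image_deviation_le)
    show "norm a = 1" "norm b = 1" using nx by (simp_all add: a_def b_def)
    fix v assume "v \<in> {a + b, a - b}"
    then have v: "supp v \<subseteq> insert j (supp x)" using supp_ab by blast
    then have "supp v \<inter> L = {}" using disj j by blast
    moreover have "l0 v + card L \<le> l0 x + card L + 1" using l0_le_of_supp_subset_insert[OF v] by simp
    ultimately show "(1 - d) * (norm v)\<^sup>2 \<le> (norm (?A v))\<^sup>2 \<and> (norm (?A v))\<^sup>2 \<le> (1 + d) * (norm v)\<^sup>2"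
      by (rule A_mat_RIP[OF rip])
  qed (rule matrix_vector_mul_linear)
  moreover have "?A x = norm x *\<^sub>R ?A b" "x$j = norm x * (a \<bullet> b)"
    using nx by (simp_all add: a_def b_def matrix_vector_mult_scaleR inner_axis')
  ultimately have "\<bar>?A a \<bullet> ?A x - x$j\<bar> \<le> norm x * d"
    using nx by (simp add: right_diff_distrib[symmetric] abs_mult mult_left_mono)
  then show ?thesis by (simp add: a_def mult.commute)
qed

lemma infnorm_attained_cart:
  fixes x :: "real^'n"
  obtains i where "infnorm x = \<bar>x$i\<bar>"
proof -
  have "infnorm x = Max (range (\<lambda>i. \<bar>x$i\<bar>))"
    unfolding infnorm_cart by (simp add: cSup_eq_Max full_SetCompr_eq)
  moreover have "Max (range (\<lambda>i. \<bar>x$i\<bar>)) \<in> range (\<lambda>i. \<bar>x$i\<bar>)"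
    by (intro Max_in) auto
  ultimately show ?thesis using that by (metis imageE)
qed

theorem corollary1:
  fixes Phi :: "real^'n^'m" and \<Lambda> :: "'n set" and x :: "real^'n" and \<delta> :: real
  assumes "supp x \<inter> \<Lambda> = {}"
    and "RIP Phi (l0 x + card \<Lambda> + 1) \<delta>"
    and "infnorm x > 2 * \<delta> / (1 - \<delta>) * norm x"
  shows "\<forall>j. (\<forall>k. \<bar>(transpose (A_mat Phi \<Lambda>) *v (A_mat Phi \<Lambda> *v x)) $ k\<bar>
                   \<le> \<bar>(transpose (A_mat Phi \<Lambda>) *v (A_mat Phi \<Lambda> *v x)) $ j\<bar>)
             \<longrightarrow> j \<in> supp x"
proof (intro allI impI)
  fix j
  let ?h = "\<lambda>k. (transpose (A_mat Phi \<Lambda>) *v (A_mat Phi \<Lambda> *v x)) $ k"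
  assume max: "\<forall>k. \<bar>?h k\<bar> \<le> \<bar>?h j\<bar>"
  have \<delta>: "0 < \<delta>" "\<delta> < 1" using assms(2) unfolding RIP_def by auto
  have close: "\<bar>?h k - x$k\<bar> \<le> \<delta> * norm x" if "k \<notin> \<Lambda>" for k
    unfolding transpose_mult_self_component by (rule A_mat_inner_axis_deviation[OF assms(2,1) that])
  obtain i where i: "infnorm x = \<bar>x$i\<bar>" by (rule infnorm_attained_cart)
  have "2 * \<delta> * norm x \<le> 2 * \<delta> / (1 - \<delta>) * norm x"
    using \<delta> by (intro mult_right_mono) (simp_all add: field_simps)
  then have big: "\<bar>x$i\<bar> > 2 * \<delta> * norm x" using assms(3) i by linarith
  moreover have "0 \<le> 2 * \<delta> * norm x" using \<delta> by simp
  ultimately have "i \<in> supp x" by (auto simp: supp_def)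
  then have "i \<notin> \<Lambda>" using assms(1) by blast
  then have big_h: "\<bar>?h i\<bar> > \<delta> * norm x" using close[of i] big by linarith
  have small_h: "\<bar>?h k\<bar> \<le> \<delta> * norm x" if "k \<notin> supp x" for k
  proof (cases "k \<in> \<Lambda>")
    case True
    then show ?thesis
      using \<delta> unfolding transpose_mult_self_component by (simp add: A_mat_mult_axis_in)
  next
    case False
    then show ?thesis using close[of k] that by (simp add: supp_def)
  qed
  show "j \<in> supp x"
  proof (rule ccontr)
    assume "j \<notin> supp x"
    then show False using small_h[of j] big_h max[rule_format, of i] by linarith
  qed
qed

end
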